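(* Let $\mathbf U$ be a real $3\times3$ positive-definite symmetric matrix, let $\hat{\mathbf e}\in\mathbb R^3$ with $|\hat{\mathbf e}|=1$, and define $\hat{\mathbf U}=(-\mathbf I+2\hat{\mathbf e}\otimes\hat{\mathbf e})\mathbf U(-\mathbf I+2\hat{\mathbf e}\otimes\hat{\mathbf e})$. Let $\hat{\mathbf R}\in\mathrm{SO}(3)$ and $\mathbf a,\mathbf n\in\mathbb R^3$ with $\mathbf a\neq 0$, $\mathbf n\neq0$ satisfy $\hat{\mathbf R}\hat{\mathbf U}=\mathbf U+\mathbf a\otimes\mathbf n$. Then the equation $$\mathbf R\big[f(\mathbf U+\mathbf a\otimes\mathbf n)+(1-f)\mathbf U\big]-\mathbf I=\mathbf b\otimes\mathbf m$$ has a solution $\mathbf R\in\mathrm{SO}(3)$, $\mathbf b,\mathbf m\in\mathbb R^3$ for each $f\in[0,1]$ if and only if the following three conditions hold: (CC1) $\lambda_2=1$, where $\lambda_2$ is the middle eigenvalue of $\mathbf U$; (CC2) $\mathbf a\cdot\mathbf U\,\mathrm{cof}(\mathbf U^2-\mathbf I)\,\mathbf n=0$; (CC3) $\mathrm{tr}\,\mathbf U^2-\det\mathbf U^2-\frac{|\mathbf a|^2|\mathbf n|^2}{4}-2\ge 0$.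
   Context: $\mathbf a\otimes\mathbf n$ denotes the matrix with $(\mathbf a\otimes\mathbf n)\mathbf x=(\mathbf n\cdot\mathbf x)\mathbf a$. For a $3\times3$ matrix $\mathbf A$, $\mathrm{cof}\,\mathbf A$ is its cofactor matrix, $(\mathrm{cof}\,\mathbf A)_{ij}=(-1)^{i+j}\det\hat{\mathbf A}_{ij}$, where $\hat{\mathbf A}_{ij}$ is the submatrix obtained by deleting row $i$ and column $j$. Conditions (CC1)–(CC3) are called the cofactor conditions. *)

theory Defs
  imports "HOL-Analysis.Analysis"
begin

definition tensor :: "real^'n \<Rightarrow> real^'m \<Rightarrow> real^'m^'n" where
  "tensor a n = (\<chi> i j. a $ i * n $ j)"

definition SO3 :: "(real^3^3) set" where
  "SO3 = {R. orthogonal_matrix R \<and> det R = 1}"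

definition minor2 :: "real^3^3 \<Rightarrow> 3 \<Rightarrow> 3 \<Rightarrow> 3 \<Rightarrow> 3 \<Rightarrow> real" where
  "minor2 A r1 r2 c1 c2 = A$r1$c1 * A$r2$c2 - A$r1$c2 * A$r2$c1"

definition cof3 :: "real^3^3 \<Rightarrow> real^3^3" where
  "cof3 A = vector [
     vector [  minor2 A 2 3 2 3, - minor2 A 2 3 1 3,   minor2 A 2 3 1 2],
     vector [- minor2 A 1 3 2 3,   minor2 A 1 3 1 3, - minor2 A 1 3 1 2],
     vector [  minor2 A 1 2 2 3, - minor2 A 1 2 1 3,   minor2 A 1 2 1 2]]"

definition middle_eigenvalue :: "real^3^3 \<Rightarrow> real" where
  "middle_eigenvalue U = (THE l2. \<exists>l1 l3. l1 \<le> l2 \<and> l2 \<le> l3 \<and>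
      (\<forall>t. det (U - mat t) = (l1 - t) * (l2 - t) * (l3 - t)))"

definition sym_posdef :: "real^3^3 \<Rightarrow> bool" where
  "sym_posdef U \<longleftrightarrow> transpose U = U \<and> (\<forall>x. x \<noteq> 0 \<longrightarrow> x \<bullet> (U *v x) > 0)"

end

theory Submission
  imports Defs
begin

text \<open>
  By Ball and James, for \<open>det F > 0\<close> the equation \<open>R F - I = b \<otimes> m\<close> has a solution
  \<open>R \<in> SO(3)\<close> iff the middle eigenvalue of \<open>C = F\<^sup>T F\<close> is 1, i.e. iff \<open>det (C - I) = 0\<close>
  and the sum \<open>\<sigma>\<^sub>2\<close> of the principal 2 by 2 minors of \<open>C - I\<close> is \<open>\<le> 0\<close>.
  For \<open>F = U + f a \<otimes> n\<close> we have \<open>C - I = (U\<^sup>2 - I) + n \<otimes> v + v \<otimes> n\<close> with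
  \<open>v = f U a + f\<^sup>2 |a|\<^sup>2 n / 2\<close>, so both invariants are quadratic in \<open>f\<close>.
  The twinning equation makes \<open>C\<close> at \<open>f = 1\<close> conjugate to \<open>U\<^sup>2\<close>, so each invariant takes
  the same value at \<open>f = 0\<close> and \<open>f = 1\<close> and has the form \<open>g\<^sub>0 + g\<^sub>1 (f - f\<^sup>2)\<close>.
  For the determinant, \<open>g\<^sub>1\<close> is twice the expression in (CC2); once it vanishes,
  \<open>U\<^sup>-\<^sup>1 a\<close> is an eigenvector for the eigenvalue \<open>-1\<close> of \<open>U\<^sup>2 - I - (U a) \<otimes> (U a) / |a|\<^sup>2\<close>,
  which makes the coefficient \<open>g\<^sub>1\<close> of \<open>\<sigma>\<^sub>2\<close> equal to \<open>|a|\<^sup>2 |n|\<^sup>2\<close>.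
  Evaluating at \<open>f = 0\<close> and \<open>f = 1/2\<close> gives (CC1)-(CC3).
\<close>

unbundle cross3_syntax

section \<open>Invariants of 3 by 3 matrices\<close>

definition second_invariant :: "real^3^3 \<Rightarrow> real" where
  "second_invariant M = minor2 M 1 2 1 2 + minor2 M 1 3 1 3 + minor2 M 2 3 2 3"

lemmas matrix3_simps = vec_eq_iff forall_3 sum_3 vector_3 inner_vec_def det_3 mat_def transpose_def
  trace_def matrix_matrix_mult_def matrix_vector_mult_def tensor_def cross3_def cof3_def minor2_def
  second_invariant_def

lemma vec3_cases:
  fixes v :: "real^3"
  obtains x1 x2 x3 where "v = vector [x1, x2, x3]"
proof -
  have "v = vector [v$1, v$2, v$3]" by (simp add: vec_eq_iff forall_3)
  then show ?thesis using that by blast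
qed

lemma symmetric_matrix3_cases:
  fixes M :: "real^3^3"
  assumes "transpose M = M"
  obtains a b c d e f where "M = vector [vector [a, b, c], vector [b, d, e], vector [c, e, f]]"
proof -
  have "M$i$j = M$j$i" for i j
    using arg_cong[OF assms, of "\<lambda>A. A$j$i"] by (simp add: transpose_def)
  then have "M = vector [vector [M$1$1, M$1$2, M$1$3], vector [M$1$2, M$2$2, M$2$3],
      vector [M$1$3, M$2$3, M$3$3]]"
    by (simp add: vec_eq_iff forall_3)
  then show ?thesis using that by blast
qed

lemma mat_eq_scaleR_id: "mat k = k *\<^sub>R (mat 1 :: real^'n^'n)"
  by (simp add: vec_eq_iff mat_def)

lemma mat_matrix_vector_mult: "mat k *v x = k *\<^sub>R (x :: real^'n)"
  by (metis mat_eq_scaleR_id matrix_vector_mul_lid scaleR_matrix_vector_assoc)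

lemma transpose_diff: "transpose (A - B) = transpose A - transpose (B :: 'a::ab_group_add^'n^'m)"
  by (simp add: transpose_def vec_eq_iff)

lemma matrix_diff_ldistrib: "A ** (B - C) = A ** B - A ** (C :: real^'n^'m)"
  by (simp add: vec_eq_iff matrix_matrix_mult_def sum_subtractf algebra_simps)

lemma matrix_diff_rdistrib: "(A - B) ** C = A ** C - B ** (C :: real^'n^'m)"
  by (simp add: vec_eq_iff matrix_matrix_mult_def sum_subtractf algebra_simps)

lemma matrix_mul_mat: "A ** mat k = k *\<^sub>R A" "mat k ** A = k *\<^sub>R (A :: real^'n^'n)"
  by (metis mat_eq_scaleR_id matrix_mul_rid matrix_scalar_ac)
    (metis mat_eq_scaleR_id matrix_mul_lid scalar_matrix_assoc)

lemma inner_matrix_vector_symmetric: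
  fixes D :: "real^'n^'n"
  assumes "transpose D = D"
  shows "x \<bullet> (D *v y) = (D *v x) \<bullet> y"
  by (metis assms dot_lmul_matrix transpose_matrix_vector)

lemma inner_gram_matrix: "x \<bullet> ((transpose G ** G) *v y) = (G *v x) \<bullet> (G *v y)"
  for G :: "real^'n^'n"
proof -
  have "(G *v x) \<bullet> (G *v y) = (x v* transpose G) \<bullet> (G *v y)"
    by (simp add: vector_transpose_matrix)
  also have "\<dots> = x \<bullet> (transpose G *v (G *v y))"
    by (rule dot_lmul_matrix)
  finally show ?thesis by (simp add: matrix_vector_mul_assoc)
qed

lemma tensor_matrix_vector_mult: "tensor b m *v x = (m \<bullet> x) *\<^sub>R (b :: real^'n)"
  by (simp add: vec_eq_iff tensor_def matrix_vector_mult_def inner_vec_def sum_distrib_left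
      algebra_simps)

lemma tensor_scaleR_left: "tensor (c *\<^sub>R x) n = c *\<^sub>R tensor x n"
  by (simp add: vec_eq_iff tensor_def)

lemma congruence_matrix3_entry: "(P ** X ** transpose P) $ i $ j = P$i \<bullet> (X *v P$j)"
  for P X :: "real^3^3"
  by (simp add: matrix3_simps algebra_simps)

lemma det_eq_0_imp_kernel:
  fixes A :: "real^'n^'n"
  assumes "det A = 0"
  obtains x where "x \<noteq> 0" "A *v x = 0"
proof -
  have "rank A < CARD('n)" using assms det_eq_0_rank by blast
  then have "rank A \<noteq> CARD('n)" by simp
  then show ?thesis using matrix_nonfull_linear_equations_eq that by blast
qed

lemma det_minus_mat3:
  "det (M - mat s) = trace M * s^2 - s^3 - second_invariant M * s + det (M :: real^3^3)"
  by (simp add: matrix3_simps power2_eq_square power3_eq_cube algebra_simps)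

lemma transpose_cof3_mult: "transpose (cof3 M) ** M = det M *\<^sub>R mat 1"
proof -
  obtain a b c where 1: "M$1 = vector [a, b, c]" using vec3_cases .
  obtain d e f where 2: "M$2 = vector [d, e, f]" using vec3_cases .
  obtain g h i where 3: "M$3 = vector [g, h, i]" using vec3_cases .
  show ?thesis by (simp add: matrix3_simps 1 2 3) algebra
qed

lemma det_add_tensor3: "det (A + tensor a n) = det A + n \<bullet> (transpose (cof3 A) *v a)"
proof -
  obtain p q r where 1: "A$1 = vector [p, q, r]" using vec3_cases .
  obtain s t u where 2: "A$2 = vector [s, t, u]" using vec3_cases .
  obtain v w x where 3: "A$3 = vector [v, w, x]" using vec3_cases .
  obtain a1 a2 a3 where 4: "a = vector [a1, a2, a3]" using vec3_cases .
  obtain n1 n2 n3 where 5: "n = vector [n1, n2, n3]" using vec3_cases .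
  show ?thesis by (simp add: matrix3_simps 1 2 3 4 5) algebra
qed

lemma det_id_add_tensor: "det (mat 1 + tensor x n) = 1 + x \<bullet> (n :: real^3)"
proof -
  have "cof3 (mat 1) = (mat 1 :: real^3^3)" by (simp add: matrix3_simps)
  then show ?thesis using det_add_tensor3[of "mat 1" x n] by (simp add: inner_commute)
qed

lemma cof3_cross_quadratic:
  fixes M :: "real^3^3"
  assumes "transpose M = M"
  shows "(p \<times> q) \<bullet> (cof3 M *v (p \<times> q)) = (p \<bullet> (M *v p)) * (q \<bullet> (M *v q)) - (p \<bullet> (M *v q))^2"
proof -
  obtain a b c d e f where 1: "M = vector [vector [a, b, c], vector [b, d, e], vector [c, e, f]]"
    using symmetric_matrix3_cases[OF assms] .
  obtain p1 p2 p3 where 2: "p = vector [p1, p2, p3]" using vec3_cases .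
  obtain q1 q2 q3 where 3: "q = vector [q1, q2, q3]" using vec3_cases .
  show ?thesis unfolding 1 2 3 by (simp add: matrix3_simps power2_eq_square) algebra
qed

lemma cof3_kernel_quadratic:
  fixes M :: "real^3^3"
  assumes "transpose M = M" "M *v z = 0"
  shows "z \<bullet> (cof3 M *v z) = second_invariant M * (z \<bullet> z)"
proof -
  obtain a b c d e f where 1: "M = vector [vector [a, b, c], vector [b, d, e], vector [c, e, f]]"
    using symmetric_matrix3_cases[OF assms(1)] .
  obtain z1 z2 z3 where 2: "z = vector [z1, z2, z3]" using vec3_cases .
  have "a*z1 + b*z2 + c*z3 = 0" "b*z1 + d*z2 + e*z3 = 0" "c*z1 + e*z2 + f*z3 = 0"
    using assms(2) unfolding 1 2 by (simp_all add: matrix3_simps)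
  then have "z1 * ((d*f - e*e)*z1 + (e*c - b*f)*z2 + (b*e - d*c)*z3)
      + z2 * ((c*e - b*f)*z1 + (a*f - c*c)*z2 + (b*c - a*e)*z3)
      + z3 * ((b*e - c*d)*z1 + (c*b - a*e)*z2 + (a*d - b*b)*z3)
      = (a*d - b*b + a*f - c*c + d*f - e*e) * (z1*z1 + z2*z2 + z3*z3)"
    by algebra
  then show ?thesis unfolding 1 2 by (simp add: matrix3_simps algebra_simps)
qed

lemma eigenvector_cof3:
  assumes "M *v z = \<mu> *\<^sub>R z"
  shows "det M * (z \<bullet> z) = \<mu> * (z \<bullet> (cof3 M *v z))"
proof -
  have "det M * (z \<bullet> z) = z \<bullet> ((transpose (cof3 M) ** M) *v z)"
    by (simp add: transpose_cof3_mult scaleR_matrix_vector_assoc[symmetric])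
  also have "\<dots> = \<mu> * (z \<bullet> (transpose (cof3 M) *v z))"
    by (simp add: matrix_vector_mul_assoc[symmetric] assms matrix_vector_mult_scaleR)
  also have "z \<bullet> (transpose (cof3 M) *v z) = z \<bullet> (cof3 M *v z)"
    by (metis dot_lmul_matrix inner_commute transpose_matrix_vector)
  finally show ?thesis .
qed

lemma det_sym_add_sym_tensor:
  fixes D :: "real^3^3"
  assumes "transpose D = D"
  shows "det (D + tensor n v + tensor v n)
    = det D + 2 * (v \<bullet> (cof3 D *v n)) - (n \<times> v) \<bullet> (D *v (n \<times> v))"
proof -
  obtain a b c d e f where 1: "D = vector [vector [a, b, c], vector [b, d, e], vector [c, e, f]]"
    using symmetric_matrix3_cases[OF assms] .
  obtain n1 n2 n3 where 2: "n = vector [n1, n2, n3]" using vec3_cases .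
  obtain v1 v2 v3 where 3: "v = vector [v1, v2, v3]" using vec3_cases .
  show ?thesis unfolding 1 2 3 by (simp add: matrix3_simps) algebra
qed

lemma second_invariant_sym_add_sym_tensor:
  fixes D :: "real^3^3"
  assumes "transpose D = D"
  shows "second_invariant (D + tensor n v + tensor v n)
    = second_invariant D + 2 * trace D * (n \<bullet> v) - 2 * (n \<bullet> (D *v v)) - (n \<times> v) \<bullet> (n \<times> v)"
proof -
  obtain a b c d e f where 1: "D = vector [vector [a, b, c], vector [b, d, e], vector [c, e, f]]"
    using symmetric_matrix3_cases[OF assms] .
  obtain n1 n2 n3 where 2: "n = vector [n1, n2, n3]" using vec3_cases .
  obtain v1 v2 v3 where 3: "v = vector [v1, v2, v3]" using vec3_cases .
  show ?thesis unfolding 1 2 3 by (simp add: matrix3_simps) algebra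
qed

lemma cof3_sym_rank_one_update:
  fixes D :: "real^3^3"
  assumes "transpose D = D"
  shows "n \<bullet> (cof3 (D - t *\<^sub>R tensor u u) *v n)
    = n \<bullet> (cof3 D *v n) - t * ((n \<times> u) \<bullet> (D *v (n \<times> u)))"
proof -
  obtain p q r s w x where 1: "D = vector [vector [p, q, r], vector [q, s, w], vector [r, w, x]]"
    using symmetric_matrix3_cases[OF assms] .
  obtain a1 a2 a3 where 2: "u = vector [a1, a2, a3]" using vec3_cases .
  obtain n1 n2 n3 where 3: "n = vector [n1, n2, n3]" using vec3_cases .
  show ?thesis unfolding 1 2 3 by (simp add: matrix3_simps) algebra
qed

lemma trace_rank_one_update:
  fixes D :: "real^3^3"
  shows "(n \<bullet> n) * trace (D - t *\<^sub>R tensor u u) - n \<bullet> ((D - t *\<^sub>R tensor u u) *v n)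
    = (n \<bullet> n) * trace D - n \<bullet> (D *v n) - t * ((n \<times> u) \<bullet> (n \<times> u))"
proof -
  obtain a1 a2 a3 where 1: "u = vector [a1, a2, a3]" using vec3_cases .
  obtain n1 n2 n3 where 2: "n = vector [n1, n2, n3]" using vec3_cases .
  show ?thesis unfolding 1 2 by (simp add: matrix3_simps) algebra
qed

lemma cross_quadratic_form:
  fixes M :: "real^3^3"
  assumes "transpose M = M"
  shows "(n \<times> x) \<bullet> (M *v (n \<times> x))
    = ((n \<bullet> n) * (x \<bullet> x) - (n \<bullet> x)^2) * trace M - (x \<bullet> x) * (n \<bullet> (M *v n))
      - (n \<bullet> n) * (x \<bullet> (M *v x)) + 2 * (n \<bullet> x) * (n \<bullet> (M *v x))"
proof -
  obtain p q r s w y where 1: "M = vector [vector [p, q, r], vector [q, s, w], vector [r, w, y]]"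
    using symmetric_matrix3_cases[OF assms] .
  obtain a1 a2 a3 where 2: "x = vector [a1, a2, a3]" using vec3_cases .
  obtain n1 n2 n3 where 3: "n = vector [n1, n2, n3]" using vec3_cases .
  show ?thesis unfolding 1 2 3 by (simp add: matrix3_simps power2_eq_square) algebra
qed

lemma second_invariant_minus_id:
  "second_invariant (S - mat 1) = det S - trace S + 2 - det (S - mat 1)" for S :: "real^3^3"
  by (simp add: matrix3_simps algebra_simps)

section \<open>Rank-one connections to the identity\<close>

definition right_cauchy_green :: "real^3^3 \<Rightarrow> real^3^3" where
  "right_cauchy_green F = transpose F ** F"

definition compatible_with_identity :: "real^3^3 \<Rightarrow> bool" where
  "compatible_with_identity F \<longleftrightarrow> (\<exists>R\<in>SO3. \<exists>b m. R ** F - mat 1 = tensor b m)"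

lemma symmetric_right_cauchy_green: "transpose (right_cauchy_green F) = right_cauchy_green F"
  by (simp add: right_cauchy_green_def matrix_transpose_mul)

lemma right_cauchy_green_rotation:
  assumes "R \<in> SO3"
  shows "right_cauchy_green (R ** F) = right_cauchy_green F"
proof -
  have "transpose R ** R = mat 1" using assms by (simp add: SO3_def orthogonal_matrix)
  then show ?thesis
    by (simp add: right_cauchy_green_def matrix_transpose_mul matrix_mul_assoc)
      (metis matrix_mul_assoc matrix_mul_lid)
qed

lemma rank_one_cauchy_green_invariants:
  fixes b m :: "real^3"
  defines "C \<equiv> right_cauchy_green (mat 1 + tensor b m) - mat 1"
  shows "det C = 0" "second_invariant C \<le> 0"
proof -
  obtain b1 b2 b3 where 1: "b = vector [b1, b2, b3]" using vec3_cases .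
  obtain m1 m2 m3 where 2: "m = vector [m1, m2, m3]" using vec3_cases .
  show "det C = 0" unfolding C_def right_cauchy_green_def 1 2 by (simp add: matrix3_simps) algebra
  define w where "w = 2 *\<^sub>R b + (b \<bullet> b) *\<^sub>R m"
  have "4 * second_invariant C = - ((m \<times> w) \<bullet> (m \<times> w))"
    unfolding C_def right_cauchy_green_def w_def 1 2
    by (simp add: matrix3_simps power2_eq_square) algebra
  then show "second_invariant C \<le> 0" using inner_ge_zero[of "m \<times> w"] by linarith
qed

lemma compatible_imp_invariants:
  assumes "compatible_with_identity F"
  shows "det (right_cauchy_green F - mat 1) = 0
    \<and> second_invariant (right_cauchy_green F - mat 1) \<le> 0"
proof -
  obtain R b m where R: "R \<in> SO3" and "R ** F - mat 1 = tensor b m"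
    using assms by (auto simp: compatible_with_identity_def)
  then have "R ** F = mat 1 + tensor b m" by (simp add: algebra_simps)
  then have "right_cauchy_green F = right_cauchy_green (mat 1 + tensor b m)"
    using right_cauchy_green_rotation[OF R, of F] by simp
  then show ?thesis using rank_one_cauchy_green_invariants by simp
qed

lemma binary_quadratic_form_isotropic:
  fixes A B C :: real
  assumes "A * C - B^2 \<le> 0"
  obtains s t where "s \<noteq> 0 \<or> t \<noteq> 0" "A * s^2 + 2 * B * s * t + C * t^2 = 0"
proof (cases "A = 0")
  case True
  then show ?thesis using that[of 1 0] by simp
next
  case False
  define r where "r = sqrt (B^2 - A * C)"
  have "r^2 = B^2 - A * C" unfolding r_def using assms by simp
  moreover have "A * (r - B)^2 + 2 * B * (r - B) * A + C * A^2 = A * (r^2 - B^2 + A * C)"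
    by (simp add: power2_eq_square algebra_simps)
  ultimately have "A * (r - B)^2 + 2 * B * (r - B) * A + C * A^2 = 0" by simp
  then show ?thesis using that[of "r - B" A] False by blast
qed

lemma orthonormal_frame3:
  fixes z :: "real^3"
  assumes "norm z = 1"
  obtains y1 y2 where "norm y1 = 1" "norm y2 = 1" "z \<bullet> y1 = 0" "z \<bullet> y2 = 0" "y1 \<bullet> y2 = 0"
    "y1 \<times> y2 = z"
proof -
  obtain y where "y \<noteq> 0" "orthogonal z y"
    using orthogonal_to_vector_exists[of z] by auto
  define y1 where "y1 = y /\<^sub>R norm y"
  have y1: "norm y1 = 1" "z \<bullet> y1 = 0"
    using \<open>y \<noteq> 0\<close> \<open>orthogonal z y\<close> by (simp_all add: y1_def orthogonal_def)
  have "(norm (z \<times> y1))\<^sup>2 = 1" using y1 assms by (simp add: norm_cross)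
  then have "norm (z \<times> y1) = 1" using norm_ge_zero[of "z \<times> y1"] by (auto simp: power2_eq_1_iff)
  moreover have "y1 \<times> (z \<times> y1) = z"
    using y1 by (simp add: Lagrange inner_commute norm_eq_1)
  ultimately show ?thesis
    using that[of y1 "z \<times> y1"] y1 by (simp add: dot_cross_self)
qed

lemma symmetric_kernel_isotropic:
  fixes D :: "real^3^3"
  assumes symD: "transpose D = D" and z: "norm z = 1" "D *v z = 0"
    and inv: "second_invariant D \<le> 0"
  obtains w where "norm w = 1" "z \<bullet> w = 0" "w \<bullet> (D *v w) = 0"
proof -
  obtain y1 y2 where y: "norm y1 = 1" "norm y2 = 1" "z \<bullet> y1 = 0" "z \<bullet> y2 = 0" "y1 \<bullet> y2 = 0"
    "y1 \<times> y2 = z"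
    using orthonormal_frame3[OF z(1)] .
  define A where "A = y1 \<bullet> (D *v y1)"
  define B where "B = y1 \<bullet> (D *v y2)"
  define C where "C = y2 \<bullet> (D *v y2)"
  have "A * C - B^2 = z \<bullet> (cof3 D *v z)"
    using cof3_cross_quadratic[OF symD, of y1 y2] y(6) by (simp add: A_def B_def C_def)
  also have "\<dots> = second_invariant D"
    using cof3_kernel_quadratic[OF symD z(2)] z(1) by (simp add: norm_eq_1)
  finally obtain s t where st: "s \<noteq> 0 \<or> t \<noteq> 0" "A * s^2 + 2 * B * s * t + C * t^2 = 0"
    using binary_quadratic_form_isotropic inv by (metis order_refl)
  define v where "v = s *\<^sub>R y1 + t *\<^sub>R y2"
  have "v \<bullet> v = s^2 + t^2"
    using y
    by (simp add: v_def inner_add_left inner_add_right inner_commute norm_eq_1 power2_eq_square)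
  then have "v \<noteq> 0" using st(1) by auto
  have "y2 \<bullet> (D *v y1) = y1 \<bullet> (D *v y2)"
    using inner_matrix_vector_symmetric[OF symD, of y2 y1] by (simp add: inner_commute)
  then have "v \<bullet> (D *v v) = A * s^2 + 2 * B * s * t + C * t^2"
    by (simp add: v_def algebra_simps inner_add_left inner_add_right A_def B_def C_def
        power2_eq_square)
  then have "v \<bullet> (D *v v) = 0" using st(2) by simp
  moreover have "z \<bullet> v = 0" using y by (simp add: v_def inner_add_right)
  ultimately show ?thesis
    using that[of "v /\<^sub>R norm v"] \<open>v \<noteq> 0\<close> by (simp add: matrix_vector_mult_scaleR)
qed

lemma matrix_eq_by_orthonormal_rows:
  fixes P X Y :: "real^3^3"
  assumes P: "P ** transpose P = mat 1" and XY: "\<And>i j. P$i \<bullet> (X *v P$j) = P$i \<bullet> (Y *v P$j)"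
  shows "X = Y"
proof -
  have PXP: "P ** X ** transpose P = P ** Y ** transpose P"
    using XY by (simp add: vec_eq_iff congruence_matrix3_entry)
  have "transpose P ** P = mat 1" using P matrix_left_right_inverse by blast
  then have "Z = transpose P ** (P ** Z ** transpose P) ** P" for Z :: "real^3^3"
    by (simp add: matrix_mul_assoc) (metis matrix_mul_assoc matrix_mul_lid matrix_mul_rid)
  then show ?thesis using PXP by metis
qed

lemma equal_cauchy_green_imp_rotation:
  fixes F G :: "real^3^3"
  assumes CG: "right_cauchy_green G = right_cauchy_green F" and "det F > 0" "det G > 0"
  obtains R where "R \<in> SO3" "R ** F = G"
proof -
  obtain Fi where Fi: "F ** Fi = mat 1" "Fi ** F = mat 1"
    using \<open>det F > 0\<close> invertible_det_nz[of F] unfolding invertible_def by auto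
  define R where "R = G ** Fi"
  have "R ** F = G" by (simp add: R_def matrix_mul_assoc[symmetric] Fi(2))
  have "transpose R ** R = transpose Fi ** right_cauchy_green G ** Fi"
    by (simp add: R_def right_cauchy_green_def matrix_transpose_mul matrix_mul_assoc)
  also have "\<dots> = transpose Fi ** right_cauchy_green F ** Fi"
    by (simp add: CG)
  also have "\<dots> = transpose (F ** Fi) ** (F ** Fi)"
    by (simp add: right_cauchy_green_def matrix_transpose_mul matrix_mul_assoc)
  finally have oR: "orthogonal_matrix R" by (simp add: Fi(1) orthogonal_matrix)
  have "det F * det Fi = 1" using arg_cong[OF Fi(1), of det] by (simp add: det_mul)
  then have "det Fi > 0" using \<open>det F > 0\<close> by (metis zero_less_mult_pos zero_less_one)
  then have "det R > 0" using \<open>det G > 0\<close> by (simp add: R_def det_mul)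
  then have "det R = 1" using det_orthogonal_matrix[OF oR] by auto
  then show ?thesis using that oR \<open>R ** F = G\<close> by (simp add: SO3_def)
qed

lemma orthonormal_rows_cross:
  fixes z w :: "real^3"
  assumes zw: "norm z = 1" "norm w = 1" "z \<bullet> w = 0"
  shows "vector [z, w, z \<times> w] ** transpose (vector [z, w, z \<times> w]) = (mat 1 :: real^3^3)"
proof -
  have "(norm (z \<times> w))\<^sup>2 = 1" using zw by (simp add: norm_cross)
  then have "(z \<times> w) \<bullet> (z \<times> w) = 1" by (simp add: power2_norm_eq_inner)
  then show ?thesis
    using zw by (simp add: vec_eq_iff forall_3 congruence_matrix3_entry[where X = "mat 1", simplified]
        inner_commute mat_def dot_cross_self norm_eq_1)
qed

lemma rank_one_factor_of_cauchy_green: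
  fixes C :: "real^3^3" and z w :: "real^3"
  assumes symC: "transpose C = C" and "det C > 0"
    and zw: "norm z = 1" "norm w = 1" "z \<bullet> w = 0"
    and Cz: "C *v z = z" and Cw: "w \<bullet> (C *v w) = 1"
  obtains b where "right_cauchy_green (mat 1 + tensor b (z \<times> w)) = C"
    and "det (mat 1 + tensor b (z \<times> w)) > 0"
proof -
  define m where "m = z \<times> w"
  define P :: "real^3^3" where "P = vector [z, w, m]"
  have PP: "P ** transpose P = mat 1" using orthonormal_rows_cross[OF zw] by (simp add: P_def m_def)
  have P: "P$1 = z" "P$2 = w" "P$3 = m" by (simp_all add: P_def)
  have "(norm m)\<^sup>2 = 1" using zw by (simp add: m_def norm_cross)
  then have m: "m \<bullet> m = 1" by (simp add: power2_norm_eq_inner)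
  have zm: "z \<bullet> m = 0" "w \<bullet> m = 0" by (simp_all add: m_def dot_cross_self)
  have orth': "w \<bullet> z = 0" "m \<bullet> z = 0" "m \<bullet> w = 0"
    using zw(3) zm by (simp_all add: inner_commute)
  have zz: "z \<bullet> z = 1" "w \<bullet> w = 1" using zw by (simp_all add: norm_eq_1)
  define q where "q = w \<bullet> (C *v m)"
  define \<gamma> where "\<gamma> = m \<bullet> (C *v m)"
  have Cz': "x \<bullet> (C *v z) = x \<bullet> z" "z \<bullet> (C *v x) = z \<bullet> x" for x
    using inner_matrix_vector_symmetric[OF symC, of z x] Cz by (simp_all add: inner_commute)
  have Cwm: "w \<bullet> (C *v m) = q" and Cmm: "m \<bullet> (C *v m) = \<gamma>"
    by (simp_all add: q_def \<gamma>_def)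
  have Cmw: "m \<bullet> (C *v w) = q"
    using inner_matrix_vector_symmetric[OF symC, of m w] by (simp add: q_def inner_commute)
  have "P ** C ** transpose P = vector [vector [1, 0, 0], vector [0, 1, q], vector [0, q, \<gamma>]]"
    by (simp add: vec_eq_iff forall_3 congruence_matrix3_entry P Cz' Cw Cmw Cwm Cmm zz zw(3) zm
        orth')
  then have "det (P ** C ** transpose P) = \<gamma> - q^2" by (simp add: det_3 power2_eq_square)
  moreover have "det (P ** C ** transpose P) = det C"
    using arg_cong[OF PP, of det] by (simp add: det_mul det_transpose)
  ultimately have pos: "\<gamma> - q^2 > 0" using \<open>det C > 0\<close> by simp
  define s where "s = sqrt (\<gamma> - q^2)"
  define b where "b = q *\<^sub>R w + (s - 1) *\<^sub>R m"
  define G where "G = mat 1 + tensor b m"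
  have Gx: "G *v x = x + (m \<bullet> x) *\<^sub>R b" for x
    by (simp add: G_def matrix_vector_mult_add_rdistrib tensor_matrix_vector_mult)
  have Gz: "G *v z = z" and Gw: "G *v w = w"
    using zm Gx by (simp_all add: inner_commute)
  have Gm: "G *v m = q *\<^sub>R w + s *\<^sub>R m"
    using Gx[of m] m by (simp add: b_def algebra_simps)
  have "s^2 = \<gamma> - q^2" using pos by (simp add: s_def)
  then have Gmm: "(G *v m) \<bullet> (G *v m) = \<gamma>"
    using zz zm m by (simp add: Gm inner_add_left inner_add_right inner_commute power2_eq_square)
  have Gmw: "w \<bullet> (G *v m) = q" "z \<bullet> (G *v m) = 0"
    using zz zm zw(3) by (simp_all add: Gm inner_add_right)
  then have Gmw': "(G *v m) \<bullet> w = q" "(G *v m) \<bullet> z = 0" by (simp_all add: inner_commute)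
  have "\<forall>i j. P$i \<bullet> (right_cauchy_green G *v P$j) = P$i \<bullet> (C *v P$j)"
    unfolding forall_3 right_cauchy_green_def inner_gram_matrix P
    by (simp add: Gz Gw Gmm Gmw Gmw' Cz' Cw Cmw Cwm Cmm zz orth' zm zw(3))
  then have "right_cauchy_green G = C"
    using matrix_eq_by_orthonormal_rows[OF PP] by blast
  moreover have "det G = s"
    using det_id_add_tensor[of b m] orth' m by (simp add: G_def b_def inner_add_right inner_commute)
  moreover have "s > 0" using pos by (simp add: s_def)
  ultimately show ?thesis using that[of b] by (simp add: G_def m_def)
qed

lemma invariants_imp_compatible:
  fixes F :: "real^3^3"
  assumes "det F > 0" and "det (right_cauchy_green F - mat 1) = 0"
    and "second_invariant (right_cauchy_green F - mat 1) \<le> 0"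
  shows "compatible_with_identity F"
proof -
  define C where "C = right_cauchy_green F"
  have symC: "transpose C = C" by (simp add: C_def symmetric_right_cauchy_green)
  have symD: "transpose (C - mat 1) = C - mat 1" by (simp add: transpose_diff symC)
  have D_mv: "(C - mat 1) *v x = C *v x - x" for x
    by (simp add: matrix_vector_mult_diff_rdistrib)
  obtain z0 where "z0 \<noteq> 0" "(C - mat 1) *v z0 = 0"
    using det_eq_0_imp_kernel assms(2) unfolding C_def by blast
  then obtain z where z: "norm z = 1" "(C - mat 1) *v z = 0"
    by (intro that[of "z0 /\<^sub>R norm z0"]) (auto simp: matrix_vector_mult_scaleR)
  obtain w where w: "norm w = 1" "z \<bullet> w = 0" "w \<bullet> ((C - mat 1) *v w) = 0"
    using symmetric_kernel_isotropic[OF symD z] assms(3) unfolding C_def by blast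
  have "det C > 0"
    using \<open>det F > 0\<close> by (simp add: C_def right_cauchy_green_def det_mul det_transpose)
  moreover have "C *v z = z" "w \<bullet> (C *v w) = 1"
    using z(2) w(1,3) by (simp_all add: D_mv inner_diff_right norm_eq_1)
  ultimately obtain b where b: "right_cauchy_green (mat 1 + tensor b (z \<times> w)) = C"
    "det (mat 1 + tensor b (z \<times> w)) > 0"
    using rank_one_factor_of_cauchy_green[OF symC _ z(1) w(1,2)] by blast
  obtain R where "R \<in> SO3" "R ** F = mat 1 + tensor b (z \<times> w)"
    using equal_cauchy_green_imp_rotation[OF b(1)[unfolded C_def] \<open>det F > 0\<close> b(2)] .
  then show ?thesis unfolding compatible_with_identity_def by force
qed

lemma compatible_with_identity_iff:
  fixes F :: "real^3^3"
  assumes "det F > 0"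
  shows "compatible_with_identity F \<longleftrightarrow>
    det (right_cauchy_green F - mat 1) = 0 \<and> second_invariant (right_cauchy_green F - mat 1) \<le> 0"
  using compatible_imp_invariants invariants_imp_compatible assms by blast

section \<open>Eigenvalues of symmetric matrices\<close>

lemma cubic_has_real_root:
  fixes c2 c1 c0 :: real
  obtains x where "c2 * x^2 - x^3 - c1 * x + c0 = 0"
proof -
  define K where "K = \<bar>c2\<bar> + \<bar>c1\<bar> + \<bar>c0\<bar>"
  define T where "T = K + 1"
  have bound: "\<bar>c2 * x^2 - c1 * x + c0\<bar> \<le> K * x^2" if "\<bar>x\<bar> \<ge> 1" for x
  proof -
    have "\<bar>x\<bar> * 1 \<le> \<bar>x\<bar> * \<bar>x\<bar>" using that by (intro mult_left_mono) auto
    moreover have "x^2 = \<bar>x\<bar> * \<bar>x\<bar>" by (simp add: power2_eq_square)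
    ultimately have x2: "\<bar>x\<bar> \<le> x^2" "1 \<le> x^2" using that by linarith+
    have "\<bar>c1\<bar> * \<bar>x\<bar> \<le> \<bar>c1\<bar> * x^2" "\<bar>c0\<bar> * 1 \<le> \<bar>c0\<bar> * x^2"
      using x2 by (simp_all only: mult_left_mono abs_ge_zero)
    moreover have "\<bar>c2 * x^2 - c1 * x + c0\<bar> \<le> \<bar>c2\<bar> * x^2 + \<bar>c1\<bar> * \<bar>x\<bar> + \<bar>c0\<bar>"
      using abs_triangle_ineq[of "c2 * x^2 - c1 * x" c0] abs_triangle_ineq4[of "c2 * x^2" "c1 * x"]
      by (simp add: abs_mult)
    ultimately show ?thesis unfolding K_def by (simp add: algebra_simps)
  qed
  have T: "\<bar>T\<bar> \<ge> 1" "\<bar>-T\<bar> \<ge> 1" "-T \<le> T" unfolding T_def K_def by auto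
  have T3: "T^3 = K * T^2 + T^2" by (simp add: T_def power2_eq_square power3_eq_cube algebra_simps)
  have "c2 * T^2 - T^3 - c1 * T + c0 \<le> 0"
    using bound[OF T(1)] T3 zero_le_power2[of T] unfolding abs_le_iff by linarith
  moreover have "\<bar>c2 * T^2 + c1 * T + c0\<bar> \<le> K * T^2" using bound[OF T(2)] by simp
  then have "c2 * T^2 + T^3 + c1 * T + c0 \<ge> 0"
    using T3 zero_le_power2[of T] unfolding abs_le_iff by linarith
  then have "c2 * (-T)^2 - (-T)^3 - c1 * (-T) + c0 \<ge> 0" by simp
  moreover have "continuous_on {-T..T} (\<lambda>x. c2 * x^2 - x^3 - c1 * x + c0)"
    by (intro continuous_intros)
  ultimately show ?thesis
    using IVT2'[of "\<lambda>x. c2 * x^2 - x^3 - c1 * x + c0" T 0 "-T"] T(3) that by auto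
qed

lemma matrix3_real_eigenvector:
  fixes U :: "real^3^3"
  obtains \<mu> z where "norm z = 1" "U *v z = \<mu> *\<^sub>R z"
proof -
  obtain \<mu> where "trace U * \<mu>^2 - \<mu>^3 - second_invariant U * \<mu> + det U = 0"
    using cubic_has_real_root .
  then have "det (U - mat \<mu>) = 0" by (simp add: det_minus_mat3)
  then obtain z0 where "z0 \<noteq> 0" "(U - mat \<mu>) *v z0 = 0"
    using det_eq_0_imp_kernel by blast
  then show ?thesis
    by (intro that[of "z0 /\<^sub>R norm z0" \<mu>])
      (auto simp: matrix_vector_mult_scaleR matrix_vector_mult_diff_rdistrib mat_matrix_vector_mult)
qed

lemma det_minus_mat_eigenvector_split:
  fixes U :: "real^3^3"
  assumes symU: "transpose U = U" and z: "norm z = 1" "U *v z = \<mu> *\<^sub>R z"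
    and y: "norm y1 = 1" "norm y2 = 1" "y1 \<bullet> y2 = 0" "y1 \<times> y2 = z"
  shows "det (U - mat t) = (\<mu> - t) *
    ((y1 \<bullet> (U *v y1) - t) * (y2 \<bullet> (U *v y2) - t) - (y1 \<bullet> (U *v y2))^2)"
proof -
  have symM: "transpose (U - mat t) = U - mat t" by (simp add: transpose_diff symU)
  have Mv: "(U - mat t) *v x = U *v x - t *\<^sub>R x" for x
    by (simp add: matrix_vector_mult_diff_rdistrib mat_matrix_vector_mult)
  have "(U - mat t) *v z = (\<mu> - t) *\<^sub>R z" by (simp only: Mv z(2) scaleR_diff_left)
  then have "det (U - mat t) = (\<mu> - t) * (z \<bullet> (cof3 (U - mat t) *v z))"
    using eigenvector_cof3 z(1) by (metis mult.right_neutral norm_eq_1)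
  also have "z \<bullet> (cof3 (U - mat t) *v z)
      = (y1 \<bullet> (U *v y1) - t) * (y2 \<bullet> (U *v y2) - t) - (y1 \<bullet> (U *v y2))^2"
    using cof3_cross_quadratic[OF symM, of y1 y2] y by (simp add: Mv inner_diff_right norm_eq_1)
  finally show ?thesis .
qed

lemma symmetric2_char_poly_factors:
  fixes A B C :: real
  obtains r1 r2 where "r1 \<le> r2" "\<And>t. (A - t) * (C - t) - B^2 = (r1 - t) * (r2 - t)"
proof -
  define \<delta> where "\<delta> = sqrt (((A - C) / 2)^2 + B^2)"
  define r1 r2 where "r1 = (A + C) / 2 - \<delta>" and "r2 = (A + C) / 2 + \<delta>"
  have \<delta>2: "\<delta>^2 = ((A - C) / 2)^2 + B^2" by (simp add: \<delta>_def)
  have "(A - t) * (C - t) - B^2 = (r1 - t) * (r2 - t)" for t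
  proof -
    have "(r1 - t) * (r2 - t) = ((A + C) / 2 - t)^2 - \<delta>^2"
      by (simp add: r1_def r2_def power2_eq_square field_simps)
    then show ?thesis unfolding \<delta>2 by (simp add: power2_eq_square field_simps)
  qed
  moreover have "r1 \<le> r2" by (simp add: r1_def r2_def \<delta>_def)
  ultimately show ?thesis using that by blast
qed

lemma symmetric3_char_poly_factors:
  fixes U :: "real^3^3"
  assumes symU: "transpose U = U"
  obtains l1 l2 l3 where "l1 \<le> l2" "l2 \<le> l3" "\<And>t. det (U - mat t) = (l1 - t) * (l2 - t) * (l3 - t)"
proof -
  obtain \<mu> z where z: "norm z = 1" "U *v z = \<mu> *\<^sub>R z"
    using matrix3_real_eigenvector .
  obtain y1 y2 where y: "norm y1 = 1" "norm y2 = 1" "z \<bullet> y1 = 0" "z \<bullet> y2 = 0" "y1 \<bullet> y2 = 0"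
    "y1 \<times> y2 = z"
    using orthonormal_frame3[OF z(1)] .
  obtain r1 r2 where r: "r1 \<le> r2" and
    "\<And>t. (y1 \<bullet> (U *v y1) - t) * (y2 \<bullet> (U *v y2) - t) - (y1 \<bullet> (U *v y2))^2 = (r1 - t) * (r2 - t)"
    using symmetric2_char_poly_factors[of "y1 \<bullet> (U *v y1)" "y2 \<bullet> (U *v y2)" "y1 \<bullet> (U *v y2)"]
    by blast
  then have fac: "det (U - mat t) = (\<mu> - t) * (r1 - t) * (r2 - t)" for t
    using det_minus_mat_eigenvector_split[OF symU z y(1,2,5,6)] by simp
  consider "\<mu> \<le> r1" | "r1 \<le> \<mu>" "\<mu> \<le> r2" | "r2 \<le> \<mu>"
    by linarith
  then show ?thesis
  proof cases
    case 1
    then show ?thesis using that[of \<mu> r1 r2] r fac by simp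
  next
    case 2
    then show ?thesis using that[of r1 \<mu> r2] fac by (simp add: mult_ac)
  next
    case 3
    then show ?thesis using that[of r1 r2 \<mu>] r fac by (simp add: mult_ac)
  qed
qed

lemma sorted_cubic_middle_root_unique:
  fixes l1 l2 l3 k1 k2 k3 :: real
  assumes l: "l1 \<le> l2" "l2 \<le> l3" and k: "k1 \<le> k2" "k2 \<le> k3"
    and eq: "\<And>t. (l1 - t) * (l2 - t) * (l3 - t) = (k1 - t) * (k2 - t) * (k3 - t)"
  shows "l2 = k2"
proof -
  have root_bounds: "a1 \<le> x \<and> x \<le> a3"
    if "a1 \<le> a2" "a2 \<le> a3" "(a1 - x) * (a2 - x) * (a3 - x) = 0" for a1 a2 a3 x :: real
    using that by auto
  have "k1 \<le> l1" "l3 \<le> k3" using root_bounds[OF k] eq[of l1] eq[of l3] by auto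
  moreover have "l1 \<le> k1" "k3 \<le> l3" using root_bounds[OF l] eq[of k1] eq[of k3] by auto
  moreover have "l1 + l2 + l3 = k1 + k2 + k3"
  proof -
    have "2 * (l1 + l2 + l3) = (l1 - 1) * (l2 - 1) * (l3 - 1) + (l1 + 1) * (l2 + 1) * (l3 + 1)
        - 2 * (l1 * l2 * l3)"
      by algebra
    also have "\<dots> = (k1 - 1) * (k2 - 1) * (k3 - 1) + (k1 + 1) * (k2 + 1) * (k3 + 1)
        - 2 * (k1 * k2 * k3)"
      using eq[of 1] eq[of "-1"] eq[of 0] by simp
    also have "\<dots> = 2 * (k1 + k2 + k3)" by algebra
    finally show ?thesis by simp
  qed
  ultimately show ?thesis by linarith
qed

lemma middle_eigenvalue_eqI:
  assumes "l1 \<le> l2" "l2 \<le> l3" "\<And>t. det (U - mat t) = (l1 - t) * (l2 - t) * (l3 - t)"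
  shows "middle_eigenvalue U = l2"
  unfolding middle_eigenvalue_def
proof (rule the_equality)
  show "\<exists>l1' l3'. l1' \<le> l2 \<and> l2 \<le> l3' \<and> (\<forall>t. det (U - mat t) = (l1' - t) * (l2 - t) * (l3' - t))"
    using assms by blast
next
  fix k2
  assume "\<exists>k1 k3. k1 \<le> k2 \<and> k2 \<le> k3 \<and> (\<forall>t. det (U - mat t) = (k1 - t) * (k2 - t) * (k3 - t))"
  then obtain k1 k3 where "k1 \<le> k2" "k2 \<le> k3" "\<And>t. det (U - mat t) = (k1 - t) * (k2 - t) * (k3 - t)"
    by blast
  then show "k2 = l2" using sorted_cubic_middle_root_unique[OF assms(1,2)] assms(3) by simp
qed

lemma sym_posdef_char_poly_factors:
  assumes pd: "sym_posdef U"
  obtains l1 l2 l3 where "0 < l1" "l1 \<le> l2" "l2 \<le> l3"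
    "\<And>t. det (U - mat t) = (l1 - t) * (l2 - t) * (l3 - t)"
proof -
  obtain l1 l2 l3 where l: "l1 \<le> l2" "l2 \<le> l3"
    and fac: "\<And>t. det (U - mat t) = (l1 - t) * (l2 - t) * (l3 - t)"
    using symmetric3_char_poly_factors pd unfolding sym_posdef_def by blast
  obtain x where "x \<noteq> 0" "(U - mat l1) *v x = 0"
    using det_eq_0_imp_kernel[of "U - mat l1"] fac by auto
  then have "x \<bullet> (U *v x) = l1 * (x \<bullet> x)" "x \<bullet> (U *v x) > 0" "x \<bullet> x > 0"
    using pd by (auto simp: matrix_vector_mult_diff_rdistrib mat_matrix_vector_mult sym_posdef_def)
  then have "0 < l1" by (metis zero_less_mult_pos2)
  then show ?thesis using that l fac by blast
qed

lemma sym_posdef_det_pos: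
  assumes "sym_posdef U"
  shows "det U > 0"
proof -
  obtain l1 l2 l3 where l: "0 < l1" "l1 \<le> l2" "l2 \<le> l3"
    and fac: "\<And>t. det (U - mat t) = (l1 - t) * (l2 - t) * (l3 - t)"
    using sym_posdef_char_poly_factors[OF assms] by blast
  have "0 < l1 * l2 * l3" using l by (intro mult_pos_pos) auto
  then show ?thesis using fac[of 0] by simp
qed

lemma char_poly3_coeffs:
  fixes M :: "real^3^3"
  assumes "\<And>t. t \<in> {0, 1, 4} \<Longrightarrow> det (M - mat t) = c * t^2 - t^3 - \<sigma> * t + d"
  shows "det M = d" "trace M = c" "second_invariant M = \<sigma>"
proof -
  have "det M = d" "trace M - 1 - second_invariant M + det M = c - 1 - \<sigma> + d"
    "trace M * 16 - 64 - second_invariant M * 4 + det M = c * 16 - 64 - \<sigma> * 4 + d"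
    using assms[of 0] assms[of 1] assms[of 4] by (simp_all add: det_minus_mat3)
  then show "det M = d" "trace M = c" "second_invariant M = \<sigma>" by linarith+
qed

lemma sorted_middle_zero_iff:
  fixes m1 m2 m3 :: real
  assumes "m1 \<le> m2" "m2 \<le> m3"
  shows "m2 = 0 \<longleftrightarrow> m1 * m2 * m3 = 0 \<and> m1 * m2 + m1 * m3 + m2 * m3 \<le> 0"
proof
  assume "m2 = 0"
  then show "m1 * m2 * m3 = 0 \<and> m1 * m2 + m1 * m3 + m2 * m3 \<le> 0"
    using assms by (simp add: mult_nonpos_nonneg)
next
  assume h: "m1 * m2 * m3 = 0 \<and> m1 * m2 + m1 * m3 + m2 * m3 \<le> 0"
  then consider "m1 = 0" | "m2 = 0" | "m3 = 0" by auto
  then show "m2 = 0"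
  proof cases
    case 1
    then have "m2 * m3 \<le> 0" "0 \<le> m2" "0 \<le> m3" using h assms by auto
    then have "m2 * m3 = 0" using mult_nonneg_nonneg[of m2 m3] by linarith
    then show ?thesis using assms \<open>0 \<le> m2\<close> by auto
  next
    case 3
    then have "m1 * m2 \<le> 0" "m1 \<le> 0" "m2 \<le> 0" using h assms by auto
    then have "m1 * m2 = 0" using mult_nonpos_nonpos[of m1 m2] by linarith
    then show ?thesis using assms \<open>m2 \<le> 0\<close> by auto
  qed
qed

lemma square_minus_mat: "(U - mat r) ** (U - mat (- r)) = U ** U - mat (r^2)" for U :: "real^3^3"
  by (simp add: matrix3_simps algebra_simps power2_eq_square)

lemma middle_eigenvalue_one_iff:
  assumes pd: "sym_posdef U"
  shows "middle_eigenvalue U = 1 \<longleftrightarrow>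
    det (U ** U - mat 1) = 0 \<and> second_invariant (U ** U - mat 1) \<le> 0"
proof -
  obtain l1 l2 l3 where l: "0 < l1" "l1 \<le> l2" "l2 \<le> l3"
    and fac: "\<And>t. det (U - mat t) = (l1 - t) * (l2 - t) * (l3 - t)"
    using sym_posdef_char_poly_factors[OF pd] by blast
  define c1 c2 c3 where "c1 = l1^2" and "c2 = l2^2" and "c3 = l3^2"
  have fac2: "det (U ** U - mat t) = (c1 - t) * (c2 - t) * (c3 - t)" if "t \<ge> 0" for t
  proof -
    have "det (U ** U - mat t) = det (U - mat (sqrt t)) * det (U - mat (- sqrt t))"
      using square_minus_mat[of U "sqrt t"] det_mul[of "U - mat (sqrt t)" "U - mat (- sqrt t)"] that
      by simp
    then show ?thesis using that
      by (simp add: fac c1_def c2_def c3_def power2_eq_square algebra_simps)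
  qed
  have "det (U ** U - mat t) = (c1 + c2 + c3) * t^2 - t^3 - (c1*c2 + c1*c3 + c2*c3) * t + c1*c2*c3"
    if "t \<in> {0, 1, 4}" for t
  proof -
    have "t \<ge> 0" using that by auto
    then show ?thesis by (simp add: fac2 power2_eq_square power3_eq_cube algebra_simps)
  qed
  note coeffs = char_poly3_coeffs[OF this]
  have "second_invariant (U ** U - mat 1)
      = c1 * c2 * c3 - (c1 + c2 + c3) + 2 - (c1 - 1) * (c2 - 1) * (c3 - 1)"
    using second_invariant_minus_id[of "U ** U"] coeffs fac2[of 1] by simp
  also have "\<dots> = (c1 - 1) * (c2 - 1) + (c1 - 1) * (c3 - 1) + (c2 - 1) * (c3 - 1)"
    by algebra
  finally have inv: "second_invariant (U ** U - mat 1)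
      = (c1 - 1) * (c2 - 1) + (c1 - 1) * (c3 - 1) + (c2 - 1) * (c3 - 1)" .
  have det: "det (U ** U - mat 1) = (c1 - 1) * (c2 - 1) * (c3 - 1)" using fac2[of 1] by simp
  have ord: "c1 - 1 \<le> c2 - 1" "c2 - 1 \<le> c3 - 1"
    using l by (simp_all add: c1_def c2_def c3_def power_mono)
  have "middle_eigenvalue U = 1 \<longleftrightarrow> c2 - 1 = 0"
    using middle_eigenvalue_eqI[OF l(2,3) fac] l by (simp add: c2_def power2_eq_1_iff)
  then show ?thesis unfolding inv det sorted_middle_zero_iff[OF ord] .
qed

section \<open>The Cauchy-Green tensor along the segment\<close>

lemma cauchy_green_rank_one_perturbation:
  fixes U :: "real^3^3" and a n :: "real^3" and f :: real
  assumes "transpose U = U"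
  defines "v \<equiv> f *\<^sub>R (U *v a) + (f^2 * (a \<bullet> a) / 2) *\<^sub>R n"
  shows "right_cauchy_green (U + f *\<^sub>R tensor a n) - mat 1
    = (U ** U - mat 1) + tensor n v + tensor v n"
proof -
  obtain p q r s t w where 1: "U = vector [vector [p, q, r], vector [q, s, t], vector [r, t, w]]"
    using symmetric_matrix3_cases[OF assms(1)] .
  obtain a1 a2 a3 where 2: "a = vector [a1, a2, a3]" using vec3_cases .
  obtain n1 n2 n3 where 3: "n = vector [n1, n2, n3]" using vec3_cases .
  show ?thesis unfolding v_def right_cauchy_green_def 1 2 3
    by (simp add: matrix3_simps power2_eq_square field_simps)
qed

lemma det_cauchy_green_perturbation:
  fixes U :: "real^3^3" and a n :: "real^3"
  assumes symU: "transpose U = U"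
  defines "D \<equiv> U ** U - mat 1" and "u \<equiv> U *v a"
  shows "det (right_cauchy_green (U + f *\<^sub>R tensor a n) - mat 1) = det D
    + f * (2 * (u \<bullet> (cof3 D *v n)))
    + f^2 * ((a \<bullet> a) * (n \<bullet> (cof3 D *v n)) - (n \<times> u) \<bullet> (D *v (n \<times> u)))"
proof -
  define v where "v = f *\<^sub>R u + (f^2 * (a \<bullet> a) / 2) *\<^sub>R n"
  have symD: "transpose D = D" by (simp add: D_def transpose_diff matrix_transpose_mul symU)
  have cross: "n \<times> v = f *\<^sub>R (n \<times> u)" by (simp add: v_def cross_add_right cross_mult_right)
  have eq: "right_cauchy_green (U + f *\<^sub>R tensor a n) - mat 1 = D + tensor n v + tensor v n"
    by (simp add: cauchy_green_rank_one_perturbation[OF symU] D_def u_def v_def)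
  show ?thesis
    unfolding eq det_sym_add_sym_tensor[OF symD] cross
    by (simp add: v_def inner_add_left matrix_vector_mult_scaleR power2_eq_square algebra_simps)
qed

lemma second_invariant_cauchy_green_perturbation:
  fixes U :: "real^3^3" and a n :: "real^3"
  assumes symU: "transpose U = U"
  defines "D \<equiv> U ** U - mat 1" and "u \<equiv> U *v a"
  shows "second_invariant (right_cauchy_green (U + f *\<^sub>R tensor a n) - mat 1) = second_invariant D
    + f * (2 * trace D * (n \<bullet> u) - 2 * (n \<bullet> (D *v u)))
    + f^2 * ((a \<bullet> a) * trace D * (n \<bullet> n) - (a \<bullet> a) * (n \<bullet> (D *v n)) - (n \<times> u) \<bullet> (n \<times> u))"
proof -
  define v where "v = f *\<^sub>R u + (f^2 * (a \<bullet> a) / 2) *\<^sub>R n"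
  have symD: "transpose D = D" by (simp add: D_def transpose_diff matrix_transpose_mul symU)
  have cross: "n \<times> v = f *\<^sub>R (n \<times> u)" by (simp add: v_def cross_add_right cross_mult_right)
  have eq: "right_cauchy_green (U + f *\<^sub>R tensor a n) - mat 1 = D + tensor n v + tensor v n"
    by (simp add: cauchy_green_rank_one_perturbation[OF symU] D_def u_def v_def)
  show ?thesis
    unfolding eq second_invariant_sym_add_sym_tensor[OF symD] cross
    by (simp add: v_def inner_add_right matrix_vector_right_distrib matrix_vector_mult_scaleR
        power2_eq_square algebra_simps)
qed

lemma compressed_trace_of_eigenvector:
  fixes M :: "real^3^3" and x n :: "real^3"
  assumes symM: "transpose M = M" and Mx: "M *v x = \<mu> *\<^sub>R x" and "\<mu> \<noteq> 0" "x \<noteq> 0"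
    and nx: "n \<bullet> x = 0" and cof: "n \<bullet> (cof3 M *v n) = 0"
  shows "(n \<bullet> n) * trace M - n \<bullet> (M *v n) = \<mu> * (n \<bullet> n)"
proof -
  define y where "y = n \<times> x"
  have xy: "x \<times> y = (x \<bullet> x) *\<^sub>R n" using nx by (simp add: y_def Lagrange inner_commute)
  have xMx: "x \<bullet> (M *v x) = \<mu> * (x \<bullet> x)" by (simp add: Mx)
  have xMy: "x \<bullet> (M *v y) = 0"
    using inner_matrix_vector_symmetric[OF symM, of x y] by (simp add: Mx y_def dot_cross_self)
  have "(x \<bullet> x)^2 * (n \<bullet> (cof3 M *v n)) = (x \<bullet> (M *v x)) * (y \<bullet> (M *v y)) - (x \<bullet> (M *v y))^2"
    using cof3_cross_quadratic[OF symM, of x y]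
    by (simp add: xy matrix_vector_mult_scaleR power2_eq_square)
  then have yMy: "y \<bullet> (M *v y) = 0" using cof xMx xMy \<open>\<mu> \<noteq> 0\<close> \<open>x \<noteq> 0\<close> by simp
  have "y \<bullet> (M *v y) = (x \<bullet> x) * ((n \<bullet> n) * trace M - n \<bullet> (M *v n) - \<mu> * (n \<bullet> n))"
    using cross_quadratic_form[OF symM, of n x] nx xMx by (simp add: y_def algebra_simps)
  then show ?thesis using yMy \<open>x \<noteq> 0\<close> by simp
qed

lemma leading_coefficients_relation:
  fixes U :: "real^3^3" and a n x :: "real^3"
  assumes symU: "transpose U = U" and Ux: "U *v x = a" and nx: "n \<bullet> x = 0" and "a \<noteq> 0"
  defines "D \<equiv> U ** U - mat 1" and "u \<equiv> U *v a"
  assumes "(a \<bullet> a) * (n \<bullet> (cof3 D *v n)) = (n \<times> u) \<bullet> (D *v (n \<times> u))"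
  shows "(a \<bullet> a) * trace D * (n \<bullet> n) - (a \<bullet> a) * (n \<bullet> (D *v n)) - (n \<times> u) \<bullet> (n \<times> u)
    = - ((a \<bullet> a) * (n \<bullet> n))"
proof -
  have aa: "a \<bullet> a > 0" using \<open>a \<noteq> 0\<close> by simp
  \<comment> \<open>subtracting \<open>u \<otimes> u / |a|\<^sup>2\<close> makes \<open>x = U\<^sup>-\<^sup>1 a\<close> an eigenvector for \<open>-1\<close>\<close>
  define M where "M = D - (1 / (a \<bullet> a)) *\<^sub>R tensor u u"
  have symD: "transpose D = D" by (simp add: D_def transpose_diff matrix_transpose_mul symU)
  have "transpose (tensor u u) = tensor u u"
    by (simp add: vec_eq_iff tensor_def transpose_def mult.commute)
  then have symM: "transpose M = M" using symD by (simp add: M_def transpose_diff transpose_scalar)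
  have ux: "u \<bullet> x = a \<bullet> a"
    using inner_matrix_vector_symmetric[OF symU, of a x] by (simp add: u_def Ux)
  have Dx: "D *v x = u - x"
    by (simp add: D_def u_def matrix_vector_mult_diff_rdistrib mat_matrix_vector_mult
        matrix_vector_mul_assoc[symmetric] Ux)
  have Mx: "M *v x = (-1) *\<^sub>R x"
    using aa by (simp add: M_def matrix_vector_mult_diff_rdistrib Dx ux tensor_matrix_vector_mult
        scaleR_matrix_vector_assoc[symmetric])
  have "n \<bullet> (cof3 M *v n) = 0"
    using cof3_sym_rank_one_update[OF symD, of n "1 / (a \<bullet> a)" u] assms(7) aa
    by (simp add: M_def field_simps)
  moreover have "x \<noteq> 0" using Ux \<open>a \<noteq> 0\<close> by auto
  ultimately have "(n \<bullet> n) * trace M - n \<bullet> (M *v n) = - (n \<bullet> n)"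
    using compressed_trace_of_eigenvector[OF symM Mx _ _ nx] by simp
  then have "(n \<bullet> n) * trace D - n \<bullet> (D *v n) - ((n \<times> u) \<bullet> (n \<times> u)) / (a \<bullet> a) = - (n \<bullet> n)"
    using trace_rank_one_update[of n D "1 / (a \<bullet> a)" u] by (simp add: M_def)
  then show ?thesis using aa by (simp add: field_simps)
qed

lemma reflection_squared:
  fixes e :: "real^3"
  assumes "e \<bullet> e = 1"
  shows "(- mat 1 + 2 *\<^sub>R tensor e e) ** (- mat 1 + 2 *\<^sub>R tensor e e) = mat 1"
proof -
  obtain e1 e2 e3 where 1: "e = vector [e1, e2, e3]" using vec3_cases .
  have "e1 * e1 + e2 * e2 + e3 * e3 = 1" using assms by (simp add: 1 matrix3_simps)
  then show ?thesis unfolding 1 by (simp add: matrix3_simps) algebra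
qed

lemma symmetric_reflection:
  "transpose (- mat 1 + 2 *\<^sub>R tensor e e) = (- mat 1 + 2 *\<^sub>R tensor e e :: real^3^3)"
  by (simp add: matrix3_simps mult.commute)

lemma det_involution_conj_minus_mat:
  fixes Q M :: "real^'n^'n"
  assumes "Q ** Q = mat 1"
  shows "det (Q ** M ** Q - mat t) = det (M - mat t)"
proof -
  have "Q ** mat t ** Q = t *\<^sub>R (Q ** Q)"
    by (simp add: matrix_mul_mat scalar_matrix_assoc)
  then have "Q ** (M - mat t) ** Q = Q ** M ** Q - mat t"
    by (simp add: matrix_diff_ldistrib matrix_diff_rdistrib assms mat_eq_scaleR_id[of t])
  moreover have "det Q * det Q = 1" using arg_cong[OF assms, of det] by (simp add: det_mul)
  ultimately show ?thesis by (metis det_mul mult.commute mult.left_commute mult.right_neutral)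
qed

lemma twin_invariants:
  fixes U Rh :: "real^3^3" and e a n :: "real^3"
  assumes symU: "transpose U = U" and "norm e = 1" and "Rh \<in> SO3"
    and twin: "Rh ** ((- mat 1 + 2 *\<^sub>R tensor e e) ** U ** (- mat 1 + 2 *\<^sub>R tensor e e))
      = U + tensor a n"
  shows "det (U + tensor a n) = det U"
    and "det (right_cauchy_green (U + tensor a n) - mat 1) = det (U ** U - mat 1)"
    and "second_invariant (right_cauchy_green (U + tensor a n) - mat 1)
      = second_invariant (U ** U - mat 1)"
proof -
  define Q :: "real^3^3" where "Q = - mat 1 + 2 *\<^sub>R tensor e e"
  have QQ: "Q ** Q = mat 1"
    using reflection_squared[of e] \<open>norm e = 1\<close> by (simp add: Q_def norm_eq_1)
  have symQ: "transpose Q = Q" unfolding Q_def by (rule symmetric_reflection)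
  have "det Q * det Q = 1" using arg_cong[OF QQ, of det] by (simp add: det_mul)
  moreover have "det Rh = 1" using \<open>Rh \<in> SO3\<close> by (simp add: SO3_def)
  ultimately show "det (U + tensor a n) = det U"
    unfolding twin[symmetric] Q_def[symmetric] by (simp add: det_mul)
  have "right_cauchy_green (U + tensor a n) = right_cauchy_green (Q ** U ** Q)"
    using right_cauchy_green_rotation[OF \<open>Rh \<in> SO3\<close>, of "Q ** U ** Q"] twin[folded Q_def]
    by simp
  also have "\<dots> = Q ** (U ** U) ** Q"
    by (simp add: right_cauchy_green_def matrix_transpose_mul symQ symU matrix_mul_assoc)
      (metis QQ matrix_mul_assoc matrix_mul_lid)
  finally have conj: "right_cauchy_green (U + tensor a n) - mat 1 - mat t
      = Q ** (U ** U - mat 1) ** Q - mat t" for t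
    by (simp add: matrix_diff_ldistrib matrix_diff_rdistrib QQ)
  have "det (right_cauchy_green (U + tensor a n) - mat 1 - mat t)
      = trace (U ** U - mat 1) * t^2 - t^3 - second_invariant (U ** U - mat 1) * t
        + det (U ** U - mat 1)" for t
    unfolding conj det_involution_conj_minus_mat[OF QQ] by (rule det_minus_mat3)
  from char_poly3_coeffs[OF this]
  show "det (right_cauchy_green (U + tensor a n) - mat 1) = det (U ** U - mat 1)"
    and "second_invariant (right_cauchy_green (U + tensor a n) - mat 1)
      = second_invariant (U ** U - mat 1)"
    by simp_all
qed

lemma det_rank_one_segment:
  fixes U :: "real^3^3" and a n :: "real^3"
  assumes "det (U + tensor a n) = det U"
  shows "det (U + f *\<^sub>R tensor a n) = det U"
proof -
  have "n \<bullet> (transpose (cof3 U) *v a) = 0" using det_add_tensor3[of U a n] assms by simp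
  then show ?thesis
    using det_add_tensor3[of U "f *\<^sub>R a" n]
    by (simp add: tensor_scaleR_left matrix_vector_mult_scaleR)
qed

lemma det_cauchy_green_segment:
  fixes U :: "real^3^3" and a n :: "real^3"
  assumes symU: "transpose U = U"
    and "det (right_cauchy_green (U + tensor a n) - mat 1) = det (U ** U - mat 1)"
  shows "det (right_cauchy_green (U + f *\<^sub>R tensor a n) - mat 1)
    = det (U ** U - mat 1) + 2 * (a \<bullet> ((U ** cof3 (U ** U - mat 1)) *v n)) * (f - f^2)"
proof -
  define D where "D = U ** U - mat 1"
  define g1 where "g1 = 2 * ((U *v a) \<bullet> (cof3 D *v n))"
  define g2 where "g2 = (a \<bullet> a) * (n \<bullet> (cof3 D *v n)) - (n \<times> (U *v a)) \<bullet> (D *v (n \<times> (U *v a)))"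
  have g: "det (right_cauchy_green (U + f *\<^sub>R tensor a n) - mat 1)
      = det D + f * g1 + f^2 * g2" for f
    using det_cauchy_green_perturbation[OF symU] by (simp add: D_def g1_def g2_def)
  have "g2 = - g1" using g[of 1] assms(2) by (simp add: D_def)
  moreover have "g1 = 2 * (a \<bullet> ((U ** cof3 D) *v n))"
    using inner_matrix_vector_symmetric[OF symU, of a "cof3 D *v n"]
    by (simp add: g1_def matrix_vector_mul_assoc)
  ultimately show ?thesis by (simp add: g D_def algebra_simps)
qed

lemma second_invariant_cauchy_green_segment:
  fixes U :: "real^3^3" and a n :: "real^3"
  assumes symU: "transpose U = U" and "det U \<noteq> 0" and "a \<noteq> 0"
    and det_twin: "det (U + tensor a n) = det U"
    and det_end: "det (right_cauchy_green (U + tensor a n) - mat 1) = det (U ** U - mat 1)"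
    and inv_end: "second_invariant (right_cauchy_green (U + tensor a n) - mat 1)
      = second_invariant (U ** U - mat 1)"
    and cc2: "a \<bullet> ((U ** cof3 (U ** U - mat 1)) *v n) = 0"
  shows "second_invariant (right_cauchy_green (U + f *\<^sub>R tensor a n) - mat 1)
    = second_invariant (U ** U - mat 1) + (a \<bullet> a) * (n \<bullet> n) * (f - f^2)"
proof -
  define D where "D = U ** U - mat 1"
  define u where "u = U *v a"
  define h1 h2 where "h1 = 2 * trace D * (n \<bullet> u) - 2 * (n \<bullet> (D *v u))"
    and "h2 = (a \<bullet> a) * trace D * (n \<bullet> n) - (a \<bullet> a) * (n \<bullet> (D *v n)) - (n \<times> u) \<bullet> (n \<times> u)"
  have h: "second_invariant (right_cauchy_green (U + f *\<^sub>R tensor a n) - mat 1)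
      = second_invariant D + f * h1 + f^2 * h2" for f
    using second_invariant_cauchy_green_perturbation[OF symU]
    by (simp add: D_def u_def h1_def h2_def)
  have "invertible U" using \<open>det U \<noteq> 0\<close> by (simp add: invertible_det_nz)
  then obtain Ui where "U ** Ui = mat 1" unfolding invertible_def by blast
  define x where "x = Ui *v a"
  have Ux: "U *v x = a" by (simp add: x_def matrix_vector_mul_assoc \<open>U ** Ui = mat 1\<close>)
  have "n \<bullet> (transpose (cof3 U) *v a) = 0" using det_add_tensor3[of U a n] det_twin by simp
  then have "det U * (n \<bullet> x) = 0"
    by (simp add: Ux[symmetric] matrix_vector_mul_assoc transpose_cof3_mult
        scaleR_matrix_vector_assoc[symmetric])
  then have nx: "n \<bullet> x = 0" using \<open>det U \<noteq> 0\<close> by simp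
  have "u \<bullet> (cof3 D *v n) = 0"
    using cc2 inner_matrix_vector_symmetric[OF symU, of a "cof3 D *v n"]
    by (simp add: u_def D_def matrix_vector_mul_assoc)
  then have "(a \<bullet> a) * (n \<bullet> (cof3 D *v n)) = (n \<times> u) \<bullet> (D *v (n \<times> u))"
    using det_cauchy_green_perturbation[OF symU, where f = 1 and a = a and n = n] det_end
    by (simp add: D_def u_def)
  then have "h2 = - ((a \<bullet> a) * (n \<bullet> n))"
    using leading_coefficients_relation[OF symU Ux nx \<open>a \<noteq> 0\<close>] by (simp add: h2_def D_def u_def)
  moreover have "h1 + h2 = 0" using h[of 1] inv_end by (simp add: D_def)
  ultimately show ?thesis by (simp add: h D_def algebra_simps)
qed

section \<open>The cofactor conditions\<close>

lemma vanishing_and_nonpositive_on_unit_interval: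
  fixes g0 c h0 k :: real and g h :: "real \<Rightarrow> real"
  assumes g: "\<And>f. g f = g0 + 2 * c * (f - f^2)"
    and h: "\<And>f. c = 0 \<Longrightarrow> h f = h0 + k * (f - f^2)" and "h 0 = h0" and "0 \<le> k"
  shows "(\<forall>f\<in>{0..1}. g f = 0 \<and> h f \<le> 0) \<longleftrightarrow> g0 = 0 \<and> h0 \<le> 0 \<and> c = 0 \<and> h0 + k / 4 \<le> 0"
proof
  assume H: "\<forall>f\<in>{0..1}. g f = 0 \<and> h f \<le> 0"
  then have "g 0 = 0" "h 0 \<le> 0" "g (1/2) = 0" "h (1/2) \<le> 0" by auto
  then show "g0 = 0 \<and> h0 \<le> 0 \<and> c = 0 \<and> h0 + k / 4 \<le> 0"
    using g[of 0] g[of "1/2"] h[of "1/2"] \<open>h 0 = h0\<close> by (simp add: power2_eq_square)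
next
  assume H: "g0 = 0 \<and> h0 \<le> 0 \<and> c = 0 \<and> h0 + k / 4 \<le> 0"
  show "\<forall>f\<in>{0..1}. g f = 0 \<and> h f \<le> 0"
  proof (intro ballI conjI)
    fix f :: real
    show "g f = 0" using H g[of f] by simp
    have "f - f^2 \<le> 1 / 4"
      using zero_le_power2[of "f - 1/2"] by (simp add: power2_eq_square algebra_simps)
    then have "k * (f - f^2) \<le> k / 4" using mult_left_mono[of "f - f^2" "1 / 4" k] \<open>0 \<le> k\<close> by simp
    moreover have "h f = h0 + k * (f - f^2)" using H h by blast
    ultimately show "h f \<le> 0" using H by linarith
  qed
qed

theorem theorem1:
  fixes U :: "real^3^3" and e a n :: "real^3" and Rh :: "real^3^3"
  assumes "sym_posdef U"
    and "norm e = 1"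
    and "Rh \<in> SO3"
    and "a \<noteq> 0" and "n \<noteq> 0"
    and "Rh ** ((- mat 1 + 2 *\<^sub>R tensor e e) ** U ** (- mat 1 + 2 *\<^sub>R tensor e e))
           = U + tensor a n"
  shows "(\<forall>f \<in> {0..1::real}. \<exists>R \<in> SO3. \<exists>b m :: real^3.
            R ** (f *\<^sub>R (U + tensor a n) + (1 - f) *\<^sub>R U) - mat 1 = tensor b m)
    \<longleftrightarrow> (middle_eigenvalue U = 1
         \<and> a \<bullet> ((U ** cof3 (U ** U - mat 1)) *v n) = 0
         \<and> trace (U ** U) - det (U ** U) - (norm a)\<^sup>2 * (norm n)\<^sup>2 / 4 - 2 \<ge> 0)"
proof -
  have symU: "transpose U = U" using assms(1) by (simp add: sym_posdef_def)
  have "det U > 0" using sym_posdef_det_pos[OF assms(1)] .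
  define D where "D = U ** U - mat 1"
  define C where "C f = right_cauchy_green (U + f *\<^sub>R tensor a n) - mat 1" for f
  note twin = twin_invariants[OF symU assms(2,3,6)]
  have "f *\<^sub>R (U + tensor a n) + (1 - f) *\<^sub>R U = U + f *\<^sub>R tensor a n" for f
    by (simp add: algebra_simps)
  moreover have "det (U + f *\<^sub>R tensor a n) > 0" for f
    using det_rank_one_segment[OF twin(1)] \<open>det U > 0\<close> by simp
  ultimately have "(\<forall>f \<in> {0..1::real}. \<exists>R \<in> SO3. \<exists>b m :: real^3.
            R ** (f *\<^sub>R (U + tensor a n) + (1 - f) *\<^sub>R U) - mat 1 = tensor b m)
      \<longleftrightarrow> (\<forall>f\<in>{0..1}. det (C f) = 0 \<and> second_invariant (C f) \<le> 0)"
    using compatible_with_identity_iff by (simp add: compatible_with_identity_def C_def)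
  also have "\<dots> \<longleftrightarrow> det D = 0 \<and> second_invariant D \<le> 0 \<and> a \<bullet> ((U ** cof3 D) *v n) = 0
      \<and> second_invariant D + (norm a)\<^sup>2 * (norm n)\<^sup>2 / 4 \<le> 0"
    using vanishing_and_nonpositive_on_unit_interval[of "\<lambda>f. det (C f)" "det D"
        "a \<bullet> ((U ** cof3 D) *v n)" "\<lambda>f. second_invariant (C f)" "second_invariant D"
        "(norm a)\<^sup>2 * (norm n)\<^sup>2"]
      det_cauchy_green_segment[OF symU twin(2)]
      second_invariant_cauchy_green_segment[OF symU _ assms(4) twin]
      \<open>det U > 0\<close> symU
    by (simp add: C_def D_def right_cauchy_green_def power2_norm_eq_inner)
  also have "\<dots> \<longleftrightarrow> middle_eigenvalue U = 1 \<and> a \<bullet> ((U ** cof3 (U ** U - mat 1)) *v n) = 0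
      \<and> trace (U ** U) - det (U ** U) - (norm a)\<^sup>2 * (norm n)\<^sup>2 / 4 - 2 \<ge> 0"
    using middle_eigenvalue_one_iff[OF assms(1)] second_invariant_minus_id[of "U ** U"]
    by (auto simp: D_def)
  finally show ?thesis .
qed

end
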